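(* Let $n\equiv 2\pmod 4$ with $n\geqslant 6$. Then $\{x_1h_{n-1},\ x_2h_n,\ x_3,\ldots,x_n\}$ is a generating set of $\mathcal{AM}_n$ of minimum size. In particular, $\mathcal{AM}_n$ has rank $n$.
   Context: Let $\Omega_n=\{1<2<\cdots<n\}$ and $\mathcal{I}_n$ the monoid of all partial injective maps of $\Omega_n$, written on the right and composed left to right. $\mathcal{AI}_n$ is the set of all $\alpha\in\mathcal{I}_n$ with $\alpha=\sigma|_{\mathrm{Dom}(\alpha)}$ for some even permutation $\sigma$; $\mathcal{PMI}_n$ is the set of monotone (order-preserving or order-reversing) elements and $\mathcal{AM}_n=\mathcal{AI}_n\cap\mathcal{PMI}_n$. The rank of a monoid is the minimum size of a generating set. Let $X_i=\Omega_n\setminus\{i\}$. Define $x_1,\dots,x_n$ as the (unique) order-preserving partial permutations with: $x_1$: domain $X_1$, image $X_n$ if $n$ is odd and $X_{n-1}$ if $n$ is even; $x_2$: domain $X_2$, image $X_{n-1}$ if $n$ is odd and $X_n$ if $n$ is even; $x_i$ ($3\leqslant i\leqslant n$): domain $X_i$, image $X_{i-2}$. For $1\leqslant i\leqslant n$, $h_i$ is the unique order-reversing partial permutation with domain and image $X_i$ (the reverse of the partial identity on $X_i$). *)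

theory Defs
  imports "HOL-Combinatorics.Permutations"
begin

text \<open>Maps are written on the right and
  composed left to right: (pmult a b) x = b (a x).\<close>

type_synonym pmap = "nat \<Rightarrow> nat option"

definition Omega :: "nat \<Rightarrow> nat set" where
  "Omega n = {1..n}"

definition pmult :: "pmap \<Rightarrow> pmap \<Rightarrow> pmap" where
  "pmult a b = b \<circ>\<^sub>m a"

definition pid :: "nat \<Rightarrow> pmap" where
  "pid n = (\<lambda>x. if x \<in> Omega n then Some x else None)"

definition In :: "nat \<Rightarrow> pmap set" where
  "In n = {a. dom a \<subseteq> Omega n \<and> ran a \<subseteq> Omega n \<and> inj_on a (dom a)}"

definition AI :: "nat \<Rightarrow> pmap set" where
  "AI n = {a \<in> In n. \<exists>\<sigma>. \<sigma> permutes Omega n \<and> evenperm \<sigma> \<and>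
                         (\<forall>x\<in>dom a. a x = Some (\<sigma> x))}"

definition order_preserving :: "pmap \<Rightarrow> bool" where
  "order_preserving a \<longleftrightarrow>
     (\<forall>x\<in>dom a. \<forall>y\<in>dom a. x \<le> y \<longrightarrow> the (a x) \<le> the (a y))"

definition order_reversing :: "pmap \<Rightarrow> bool" where
  "order_reversing a \<longleftrightarrow>
     (\<forall>x\<in>dom a. \<forall>y\<in>dom a. x \<le> y \<longrightarrow> the (a y) \<le> the (a x))"

definition PMI :: "nat \<Rightarrow> pmap set" where
  "PMI n = {a \<in> In n. order_preserving a \<or> order_reversing a}"

definition AM :: "nat \<Rightarrow> pmap set" where
  "AM n = AI n \<inter> PMI n"

inductive_set gen :: "nat \<Rightarrow> pmap set \<Rightarrow> pmap set" for n A where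
  gen_id: "pid n \<in> gen n A"
| gen_base: "a \<in> A \<Longrightarrow> a \<in> gen n A"
| gen_mult: "a \<in> gen n A \<Longrightarrow> b \<in> gen n A \<Longrightarrow> pmult a b \<in> gen n A"

definition rank :: "nat \<Rightarrow> pmap set \<Rightarrow> nat" where
  "rank n M = (LEAST k. \<exists>A. A \<subseteq> M \<and> finite A \<and> card A = k \<and> gen n A = M)"

definition Xs :: "nat \<Rightarrow> nat \<Rightarrow> nat set" where
  "Xs n i = Omega n - {i}"

definition op_map :: "nat \<Rightarrow> nat set \<Rightarrow> nat set \<Rightarrow> pmap" where
  "op_map n D R = (THE a. a \<in> In n \<and> dom a = D \<and> ran a = R \<and> order_preserving a)"

definition or_map :: "nat \<Rightarrow> nat set \<Rightarrow> nat set \<Rightarrow> pmap" where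
  "or_map n D R = (THE a. a \<in> In n \<and> dom a = D \<and> ran a = R \<and> order_reversing a)"

definition xg :: "nat \<Rightarrow> nat \<Rightarrow> pmap" where
  "xg n i =
     (if i = 1 then op_map n (Xs n 1) (if odd n then Xs n n else Xs n (n - 1))
      else if i = 2 then op_map n (Xs n 2) (if odd n then Xs n (n - 1) else Xs n n)
      else op_map n (Xs n i) (Xs n (i - 2)))"

definition hg :: "nat \<Rightarrow> nat \<Rightarrow> pmap" where
  "hg n i = or_map n (Xs n i) (Xs n i)"

end

theory Submission
  imports Defs
begin

text \<open>
  Every element of \<open>AM\<^sub>n\<close> is the restriction of an even permutation, and a monotone partial
  permutation is determined by its domain, its image and its orientation. For \<open>n \<equiv> 2 (mod 4)\<close>
  the reversal of \<open>\<Omega>\<^sub>n\<close> is odd, so the only element of full rank is the identity, and the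
  elements of rank \<open>n - 1\<close> are the monotone maps \<open>X\<^sub>i \<rightarrow> X\<^sub>j\<close> with \<open>i + j\<close> even. Within each
  parity class these are products of the reversing generator and the steps \<open>x\<^sub>i : X\<^sub>i \<rightarrow> X\<^sub>i\<^sub>-\<^sub>2\<close>.
  An element of rank at most \<open>n - 2\<close> is a partial identity followed by a product of
  order-preserving corank-one maps (possibly followed by a reversing \<open>h\<^sub>j\<close>), found by shifting
  its domain and its image to an initial segment one step at a time. Conversely, the domain of a
  product lies in the domain of its first non-identity factor, so a generating set needs an
  element with domain \<open>X\<^sub>i\<close> for every \<open>i\<close>, i.e. at least \<open>n\<close> elements.
\<close>

section \<open>Parity of shifts and reversals\<close>

lemma transpose_comp_permutes_evenperm:
  assumes "p permutes S" "finite S" "a \<in> S" "b \<in> S" "a \<noteq> b"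
  shows "transpose a b \<circ> p permutes S \<and> (evenperm (transpose a b \<circ> p) \<longleftrightarrow> \<not> evenperm p)"
proof -
  have "permutation p" using assms(1,2) permutation_permutes by blast
  then show ?thesis
    using assms permutes_compose[OF assms(1) permutes_swap_id[OF assms(3,4)]]
    by (simp add: evenperm_comp permutation_swap_id evenperm_swap)
qed

text \<open>\<open>shift i j\<close> is the order-preserving bijection from \<open>{1..n} - {i}\<close> onto \<open>{1..n} - {j}\<close>;
  extended by \<open>i \<mapsto> j\<close> it becomes a cycle of length \<open>|i - j| + 1\<close>.\<close>

definition shift :: "nat \<Rightarrow> nat \<Rightarrow> nat \<Rightarrow> nat" where
  "shift i j x = (if i < j \<and> i < x \<and> x \<le> j then x - 1
                  else if j < i \<and> j \<le> x \<and> x < i then x + 1 else x)"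

definition shift_perm :: "nat \<Rightarrow> nat \<Rightarrow> nat \<Rightarrow> nat" where
  "shift_perm i j x = (if x = i then j else shift i j x)"

lemma shift_shift: "x \<noteq> i \<Longrightarrow> shift j i (shift i j x) = x"
  by (auto simp: shift_def)

lemma shift_strict_mono: "x \<noteq> i \<Longrightarrow> y \<noteq> i \<Longrightarrow> x < y \<Longrightarrow> shift i j x < shift i j y"
  by (auto simp: shift_def)

lemma shift_perm_permutes_evenperm_up:
  assumes "i \<le> j" "1 \<le> i" "j \<le> n"
  shows "shift_perm i j permutes {1..n} \<and> (evenperm (shift_perm i j) \<longleftrightarrow> even (i + j))"
  using assms
proof (induction j rule: dec_induct)
  case base
  have "shift_perm i i = id" by (auto simp: shift_perm_def shift_def)
  then show ?case by (simp add: permutes_id[unfolded id_def])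
next
  case (step k)
  have "shift_perm i (Suc k) = transpose k (Suc k) \<circ> shift_perm i k"
    using step.hyps by (intro ext) (auto simp: shift_perm_def shift_def transpose_def)
  moreover have "transpose k (Suc k) \<circ> shift_perm i k permutes {1..n} \<and>
      (evenperm (transpose k (Suc k) \<circ> shift_perm i k) \<longleftrightarrow> \<not> evenperm (shift_perm i k))"
    using step by (intro transpose_comp_permutes_evenperm) auto
  moreover have "evenperm (shift_perm i k) \<longleftrightarrow> even (i + k)"
    using step by simp
  ultimately show ?case
    by (metis add_Suc_right even_Suc)
qed

lemma shift_perm_permutes_evenperm_down:
  assumes "j \<le> i" "1 \<le> j" "i \<le> n"
  shows "shift_perm i j permutes {1..n} \<and> (evenperm (shift_perm i j) \<longleftrightarrow> even (i + j))"
  using assms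
proof (induction j rule: inc_induct)
  case base
  have "shift_perm i i = id" by (auto simp: shift_perm_def shift_def)
  then show ?case by (simp add: permutes_id[unfolded id_def])
next
  case (step k)
  have "shift_perm i k = transpose k (Suc k) \<circ> shift_perm i (Suc k)"
    using step.hyps by (intro ext) (auto simp: shift_perm_def shift_def transpose_def)
  moreover have "transpose k (Suc k) \<circ> shift_perm i (Suc k) permutes {1..n} \<and>
      (evenperm (transpose k (Suc k) \<circ> shift_perm i (Suc k)) \<longleftrightarrow> \<not> evenperm (shift_perm i (Suc k)))"
    using step by (intro transpose_comp_permutes_evenperm) auto
  moreover have "evenperm (shift_perm i (Suc k)) \<longleftrightarrow> even (i + Suc k)"
    using step by simp
  ultimately show ?case
    by (metis add_Suc_right even_Suc)
qed

lemma shift_perm_permutes_evenperm: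
  assumes "i \<in> {1..n}" "j \<in> {1..n}"
  shows "shift_perm i j permutes {1..n} \<and> (evenperm (shift_perm i j) \<longleftrightarrow> even (i + j))"
  using assms shift_perm_permutes_evenperm_up[of i j n] shift_perm_permutes_evenperm_down[of j i n]
  by (cases "i \<le> j") auto

definition reverse :: "nat \<Rightarrow> nat \<Rightarrow> nat \<Rightarrow> nat" where
  "reverse a b x = (if a \<le> x \<and> x \<le> b then a + b - x else x)"

lemma reverse_permutes_evenperm:
  "reverse a (a + d) permutes {a..a + d} \<and> (evenperm (reverse a (a + d)) \<longleftrightarrow> even ((d + 1) div 2))"
proof (induction d arbitrary: a rule: nat_induct2)
  case 0
  have "reverse a a = id" by (rule ext) (auto simp: reverse_def)
  then show ?case by (simp add: permutes_id[unfolded id_def])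
next
  case 1
  have "reverse a (a + 1) = transpose a (a + 1)" by (rule ext) (auto simp: reverse_def transpose_def)
  then show ?case by (simp add: permutes_swap_id evenperm_swap)
next
  case (step d)
  let ?r = "reverse (Suc a) (Suc a + d)"
  have "reverse a (a + (d + 2)) = transpose a (a + (d + 2)) \<circ> ?r"
    by (rule ext) (auto simp: reverse_def transpose_def)
  moreover have "?r permutes {a..a + (d + 2)}"
    using step[of "Suc a"] by (rule conjunct1[THEN permutes_subset]) auto
  then have "transpose a (a + (d + 2)) \<circ> ?r permutes {a..a + (d + 2)} \<and>
      (evenperm (transpose a (a + (d + 2)) \<circ> ?r) \<longleftrightarrow> \<not> evenperm ?r)"
    by (rule transpose_comp_permutes_evenperm) auto
  moreover have "even ((d + 2 + 1) div 2) \<longleftrightarrow> \<not> even ((d + 1) div 2)"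
    by simp
  ultimately show ?case
    using step[of "Suc a"] by (metis add_Suc_shift)
qed

lemma reverse_permutes: "reverse 1 n permutes {1..n}"
  using reverse_permutes_evenperm[of 1 "n - 1"]
  by (cases n) (auto simp: reverse_def permutes_id[unfolded id_def])

lemma odd_reverse: "n mod 4 = 2 \<Longrightarrow> \<not> evenperm (reverse 1 n)"
  using reverse_permutes_evenperm[of 1 "n - 1"] by (simp, presburger)

section \<open>Monotone partial injections\<close>

lemma strict_mono_on_eq_if_image_eq:
  fixes f g :: "'a::wellorder \<Rightarrow> 'b::linorder"
  assumes "strict_mono_on D f" "strict_mono_on D g" "f ` D = g ` D" "x \<in> D"
  shows "f x = g x"
proof (rule ccontr)
  have not_less_at_first_difference: "\<not> f x < g x"
    if mono_f: "strict_mono_on D f" and mono_g: "strict_mono_on D g"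
      and image: "f ` D = g ` D" and x: "x \<in> D"
      and agree_below: "\<forall>y\<in>D. y < x \<longrightarrow> f y = g y"
    for f g :: "'a \<Rightarrow> 'b" and x
  proof
    assume less: "f x < g x"
    obtain y where y: "y \<in> D" "f x = g y" using image x by (metis imageE imageI)
    consider "y < x" | "y = x" | "x < y" by fastforce
    then show False
    proof cases
      case 1
      then show False using y agree_below strict_mono_onD[OF mono_f y(1) x] by auto
    next
      case 2
      then show False using y less by simp
    next
      case 3
      then show False using y less strict_mono_onD[OF mono_g x y(1)] by auto
    qed
  qed
  assume "f x \<noteq> g x"
  define z where "z = (LEAST z. z \<in> D \<and> f z \<noteq> g z)"
  have z: "z \<in> D" "f z \<noteq> g z"
    using LeastI[of "\<lambda>z. z \<in> D \<and> f z \<noteq> g z"] \<open>f x \<noteq> g x\<close> assms(4) by (auto simp: z_def)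
  have "\<forall>y\<in>D. y < z \<longrightarrow> f y = g y"
    using not_less_Least by (fastforce simp: z_def)
  then show False
    using not_less_at_first_difference[of f g z] not_less_at_first_difference[of g f z] assms z
    by (metis linorder_neqE)
qed

lemma strict_antimono_on_eq_if_image_eq:
  fixes f g :: "'a::wellorder \<Rightarrow> nat"
  assumes "strict_antimono_on D f" "strict_antimono_on D g" "f ` D = g ` D" "x \<in> D"
  shows "f x = g x"
proof -
  have "strict_mono_on D (\<lambda>x. - int (f x))" "strict_mono_on D (\<lambda>x. - int (g x))"
    using assms(1,2) by (auto simp: strict_mono_on_def monotone_on_def)
  moreover have "(\<lambda>x. - int (f x)) ` D = (\<lambda>x. - int (g x)) ` D"
    using arg_cong[OF assms(3), of "image (\<lambda>v. - int v)"] by (simp add: image_image)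
  ultimately show ?thesis
    using strict_mono_on_eq_if_image_eq[OF _ _ _ assms(4)] by fastforce
qed

lemma pmult_apply: "pmult a b x = (case a x of None \<Rightarrow> None | Some y \<Rightarrow> b y)"
  by (simp add: pmult_def map_comp_def)

lemma dom_pmult: "dom (pmult a b) = {x \<in> dom a. the (a x) \<in> dom b}"
  by (auto simp: dom_def pmult_apply split: option.splits)

lemma dom_pmult_eq: "ran a \<subseteq> dom b \<Longrightarrow> dom (pmult a b) = dom a"
  by (auto simp: dom_pmult ran_def)

lemma the_pmult: "x \<in> dom (pmult a b) \<Longrightarrow> the (pmult a b x) = the (b (the (a x)))"
  by (auto simp: dom_def pmult_apply split: option.splits)

lemma ran_pmult_subset: "ran (pmult a b) \<subseteq> ran b"
  by (auto simp: ran_def pmult_apply split: option.splits)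

lemma ran_pmult:
  assumes "ran a = dom b"
  shows "ran (pmult a b) = ran b"
proof (rule antisym[OF ran_pmult_subset], rule subsetI)
  fix z assume "z \<in> ran b"
  then obtain y where y: "b y = Some z" by (auto simp: ran_def)
  then obtain x where "a x = Some y" using assms by (auto simp: ran_def)
  then have "pmult a b x = Some z" using y by (simp add: pmult_apply)
  then show "z \<in> ran (pmult a b)" by (rule ranI)
qed

lemma pmult_assoc: "pmult (pmult a b) c = pmult a (pmult b c)"
  by (rule ext) (simp add: pmult_apply split: option.splits)

lemma pmult_restrict_Some: "pmult (Some |` A) (Some |` B) = Some |` (A \<inter> B)"
  by (rule ext) (simp add: pmult_apply restrict_map_def)

lemma pmult_restrict_Some_right: "ran a \<subseteq> B \<Longrightarrow> pmult a (Some |` B) = a"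
  by (rule ext) (auto simp: pmult_apply ran_def split: option.splits)

lemma pid_eq_restrict_Some: "pid n = Some |` Omega n"
  by (simp add: pid_def restrict_map_def)

lemma pid_eq_restrict_perm: "pid n = (Some \<circ> id) |` Omega n"
  by (simp add: pid_eq_restrict_Some)

lemma the_image_dom: "(\<lambda>x. the (a x)) ` dom a = ran a"
  by (force simp: ran_def dom_def)

lemma dom_pmult_restrict_Some: "D \<subseteq> dom \<beta> \<Longrightarrow> dom (pmult (Some |` D) \<beta>) = D"
  by (auto simp: dom_pmult)

lemma ran_pmult_restrict_Some:
  assumes "D \<subseteq> dom \<beta>"
  shows "ran (pmult (Some |` D) \<beta>) = (\<lambda>x. the (\<beta> x)) ` D"
proof -
  have "ran (pmult (Some |` D) \<beta>) = (\<lambda>x. the (pmult (Some |` D) \<beta> x)) ` D"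
    using the_image_dom dom_pmult_restrict_Some[OF assms] by metis
  also have "\<dots> = (\<lambda>x. the (\<beta> x)) ` D" by (rule image_cong) (simp_all add: pmult_apply)
  finally show ?thesis .
qed

lemma order_preserving_restrict_Some: "order_preserving (Some |` D)"
  by (simp add: order_preserving_def)

lemma order_preserving_pid: "order_preserving (pid n)"
  by (simp add: pid_eq_restrict_Some order_preserving_restrict_Some)

lemma In_the_inj:
  assumes "a \<in> In n"
  shows "inj_on (\<lambda>x. the (a x)) (dom a)"
proof (rule inj_onI)
  fix x y assume "x \<in> dom a" "y \<in> dom a" "the (a x) = the (a y)"
  moreover from this have "a x = a y" by (metis domIff option.expand)
  ultimately show "x = y" using assms by (auto simp: In_def inj_on_def)
qed

lemma card_ran_In: "a \<in> In n \<Longrightarrow> card (ran a) = card (dom a)"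
  using card_image[OF In_the_inj] by (metis the_image_dom)

lemma pmult_In:
  assumes "a \<in> In n" "b \<in> In n"
  shows "pmult a b \<in> In n"
proof -
  have "inj_on (pmult a b) (dom (pmult a b))"
  proof (rule inj_onI)
    fix x y assume x: "x \<in> dom (pmult a b)" and y: "y \<in> dom (pmult a b)"
      and eq: "pmult a b x = pmult a b y"
    from x obtain u where u: "a x = Some u" "u \<in> dom b"
      by (metis (mono_tags, lifting) dom_pmult domD mem_Collect_eq option.sel)
    from y obtain v where v: "a y = Some v" "v \<in> dom b"
      by (metis (mono_tags, lifting) dom_pmult domD mem_Collect_eq option.sel)
    have "b u = b v" using eq u v by (simp add: pmult_apply)
    then have "a x = a y" using assms(2) u v by (auto simp: In_def inj_on_def)
    moreover have "x \<in> dom a" "y \<in> dom a" using u v by auto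
    ultimately show "x = y" using assms(1) by (auto simp: In_def inj_on_def)
  qed
  then show ?thesis
    using assms ran_pmult_subset[of a b] by (auto simp: In_def dom_pmult)
qed

lemma order_preserving_pmult:
  "order_preserving a \<Longrightarrow> order_preserving b \<Longrightarrow> order_preserving (pmult a b)"
  "order_preserving a \<Longrightarrow> order_reversing b \<Longrightarrow> order_reversing (pmult a b)"
  "order_reversing a \<Longrightarrow> order_preserving b \<Longrightarrow> order_reversing (pmult a b)"
  "order_reversing a \<Longrightarrow> order_reversing b \<Longrightarrow> order_preserving (pmult a b)"
  unfolding order_preserving_def order_reversing_def by (auto simp: the_pmult dom_pmult)

lemma In_strict_mono_on:
  assumes "a \<in> In n" "order_preserving a"
  shows "strict_mono_on (dom a) (\<lambda>x. the (a x))"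
proof (rule strict_mono_onI)
  fix x y assume "x \<in> dom a" "y \<in> dom a" "x < y"
  then show "the (a x) < the (a y)"
    using assms(2) inj_onD[OF In_the_inj[OF assms(1)]] unfolding order_preserving_def
    by (metis less_imp_le order.not_eq_order_implies_strict less_irrefl)
qed

lemma In_strict_antimono_on:
  assumes "a \<in> In n" "order_reversing a"
  shows "strict_antimono_on (dom a) (\<lambda>x. the (a x))"
proof (rule monotone_onI)
  fix x y assume "x \<in> dom a" "y \<in> dom a" "x < y"
  then show "the (a y) < the (a x)"
    using assms(2) inj_onD[OF In_the_inj[OF assms(1)]] unfolding order_reversing_def
    by (metis less_imp_le order.not_eq_order_implies_strict less_irrefl)
qed

lemma map_eqI_the:
  assumes "dom a = dom b" "\<And>x. x \<in> dom a \<Longrightarrow> the (a x) = the (b x)"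
  shows "a = b"
proof (rule ext, rule option.expand)
  fix x
  show "(a x = None) = (b x = None)" using assms(1) by auto
  show "a x \<noteq> None \<Longrightarrow> b x \<noteq> None \<Longrightarrow> the (a x) = the (b x)" using assms(2) by auto
qed

lemma order_preserving_eqI:
  assumes "a \<in> In n" "b \<in> In n" "dom a = dom b" "ran a = ran b"
    and "order_preserving a" "order_preserving b"
  shows "a = b"
proof (rule map_eqI_the[OF assms(3)])
  fix x assume "x \<in> dom a"
  then show "the (a x) = the (b x)"
    using strict_mono_on_eq_if_image_eq[OF In_strict_mono_on[OF assms(1,5)]
        In_strict_mono_on[OF assms(2,6), folded assms(3)]] assms(3,4) the_image_dom[of a] the_image_dom[of b]
    by simp
qed

lemma order_reversing_eqI:
  assumes "a \<in> In n" "b \<in> In n" "dom a = dom b" "ran a = ran b"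
    and "order_reversing a" "order_reversing b"
  shows "a = b"
proof (rule map_eqI_the[OF assms(3)])
  fix x assume "x \<in> dom a"
  then show "the (a x) = the (b x)"
    using strict_antimono_on_eq_if_image_eq[OF In_strict_antimono_on[OF assms(1,5)]
        In_strict_antimono_on[OF assms(2,6), folded assms(3)]] assms(3,4) the_image_dom[of a] the_image_dom[of b]
    by simp
qed

section \<open>Corank-one monotone maps\<close>

lemma permutes_eq_if_eq_off_point:
  assumes "\<sigma> permutes S" "\<tau> permutes S" "i \<in> S" "\<forall>x\<in>S - {i}. \<sigma> x = \<tau> x"
  shows "\<sigma> = \<tau>"
proof -
  have "\<sigma> ` (S - {i}) = \<tau> ` (S - {i})" using assms(4) by auto
  then have "S - {\<sigma> i} = S - {\<tau> i}"
    using assms(1,2) by (metis image_set_diff image_empty image_insert permutes_image permutes_inj)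
  moreover have "\<sigma> i \<in> S" "\<tau> i \<in> S" using assms permutes_in_image by metis+
  ultimately have "\<sigma> i = \<tau> i" by blast
  then show ?thesis
    using assms by (intro ext) (metis Diff_iff permutes_not_in singletonD)
qed

lemma dom_Some_comp [simp]: "dom (Some \<circ> f) = UNIV"
  by auto

lemma restrict_perm_In:
  assumes "\<sigma> permutes Omega n" "D \<subseteq> Omega n"
  shows "(Some \<circ> \<sigma>) |` D \<in> In n" "dom ((Some \<circ> \<sigma>) |` D) = D" "ran ((Some \<circ> \<sigma>) |` D) = \<sigma> ` D"
proof -
  show dom: "dom ((Some \<circ> \<sigma>) |` D) = D" by simp
  show ran: "ran ((Some \<circ> \<sigma>) |` D) = \<sigma> ` D" by (auto simp: ran_def restrict_map_def)
  have "inj_on ((Some \<circ> \<sigma>) |` D) D"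
    using permutes_inj[OF assms(1)] by (auto simp: inj_on_def restrict_map_def dest: injD)
  moreover have "\<sigma> ` D \<subseteq> Omega n" using assms permutes_image by blast
  ultimately show "(Some \<circ> \<sigma>) |` D \<in> In n" using assms(2) dom ran by (simp add: In_def)
qed

lemma restrict_perm_AI_iff:
  assumes "\<tau> permutes Omega n" "i \<in> Omega n" "Xs n i \<subseteq> D" "D \<subseteq> Omega n"
  shows "(Some \<circ> \<tau>) |` D \<in> AI n \<longleftrightarrow> evenperm \<tau>"
proof
  assume "(Some \<circ> \<tau>) |` D \<in> AI n"
  then obtain \<sigma> where \<sigma>: "\<sigma> permutes Omega n" "evenperm \<sigma>" "\<forall>x\<in>D. \<sigma> x = \<tau> x"
    by (auto simp: AI_def)
  then have "\<sigma> = \<tau>"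
    using assms by (intro permutes_eq_if_eq_off_point[of _ "Omega n" _ i]) (auto simp: Xs_def)
  then show "evenperm \<tau>" using \<sigma>(2) by simp
next
  assume "evenperm \<tau>"
  then show "(Some \<circ> \<tau>) |` D \<in> AI n"
    using assms restrict_perm_In(1)[OF assms(1,4)] by (auto simp: AI_def)
qed

lemma order_preserving_restrict_perm: "order_preserving ((Some \<circ> \<sigma>) |` D) \<longleftrightarrow> mono_on D \<sigma>"
  by (auto simp: order_preserving_def monotone_on_def)

lemma order_reversing_restrict_perm: "order_reversing ((Some \<circ> \<sigma>) |` D) \<longleftrightarrow> antimono_on D \<sigma>"
  by (auto simp: order_reversing_def monotone_on_def)

text \<open>\<open>corank1_map n i j r\<close> is the monotone partial permutation from \<open>X\<^sub>i\<close> onto \<open>X\<^sub>j\<close>,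
  order-reversing iff \<open>r\<close>; the reversing one is a shift onto \<open>X\<^sub>n\<^sub>+\<^sub>1\<^sub>-\<^sub>j\<close> followed by the reversal.\<close>

definition corank1_perm :: "nat \<Rightarrow> nat \<Rightarrow> nat \<Rightarrow> bool \<Rightarrow> nat \<Rightarrow> nat" where
  "corank1_perm n i j r =
     (if r then reverse 1 n \<circ> shift_perm i (n + 1 - j) else shift_perm i j)"

definition corank1_map :: "nat \<Rightarrow> nat \<Rightarrow> nat \<Rightarrow> bool \<Rightarrow> pmap" where
  "corank1_map n i j r = (Some \<circ> corank1_perm n i j r) |` Xs n i"

lemma reflect_mem_Omega: "j \<in> Omega n \<Longrightarrow> n + 1 - j \<in> Omega n"
  by (auto simp: Omega_def)

lemma corank1_perm_permutes:
  assumes "i \<in> Omega n" "j \<in> Omega n"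
  shows "corank1_perm n i j r permutes Omega n"
proof -
  have "shift_perm i (n + 1 - j) permutes {1..n}" "shift_perm i j permutes {1..n}"
    using assms reflect_mem_Omega[OF assms(2)] shift_perm_permutes_evenperm
    by (auto simp: Omega_def)
  then show ?thesis
    using permutes_compose[OF _ reverse_permutes] by (simp add: corank1_perm_def Omega_def)
qed

lemma corank1_perm_at: "i \<in> Omega n \<Longrightarrow> j \<in> Omega n \<Longrightarrow> corank1_perm n i j r i = j"
  by (auto simp: corank1_perm_def shift_perm_def reverse_def Omega_def)

lemma evenperm_corank1_perm:
  assumes "n mod 4 = 2" "i \<in> Omega n" "j \<in> Omega n"
  shows "evenperm (corank1_perm n i j r) \<longleftrightarrow> even (i + j)"
proof (cases r)
  case False
  then show ?thesis
    using assms shift_perm_permutes_evenperm[of i n j] by (simp add: corank1_perm_def Omega_def)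
next
  case True
  let ?j' = "n + 1 - j"
  have "shift_perm i ?j' permutes {1..n}" "evenperm (shift_perm i ?j') \<longleftrightarrow> even (i + ?j')"
    using assms reflect_mem_Omega[OF assms(3)] shift_perm_permutes_evenperm[of i n ?j']
    by (auto simp: Omega_def)
  moreover have "j \<le> n" using assms(3) by (simp add: Omega_def)
  then have "even (i + ?j') \<longleftrightarrow> odd (i + j)" using assms(1) by presburger
  ultimately show ?thesis
    using True odd_reverse[OF assms(1)] reverse_permutes
      evenperm_comp[of "reverse 1 n" "shift_perm i ?j'"]
    by (auto simp: corank1_perm_def permutation_permutes)
qed

lemma dom_corank1_map [simp]: "dom (corank1_map n i j r) = Xs n i"
  by (simp add: corank1_map_def)

lemma corank1_map_In:
  assumes "i \<in> Omega n" "j \<in> Omega n"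
  shows "corank1_map n i j r \<in> In n" "ran (corank1_map n i j r) = Xs n j"
proof -
  note restrict = restrict_perm_In[OF corank1_perm_permutes[OF assms], of "Xs n i" r]
  show "corank1_map n i j r \<in> In n" using restrict by (auto simp: corank1_map_def Xs_def)
  have "corank1_perm n i j r ` Xs n i = Omega n - {j}"
    using corank1_perm_permutes[OF assms] corank1_perm_at[OF assms]
    by (metis Xs_def image_set_diff image_empty image_insert permutes_image permutes_inj)
  then show "ran (corank1_map n i j r) = Xs n j"
    using restrict by (auto simp: corank1_map_def Xs_def)
qed

lemma order_preserving_corank1_map: "order_preserving (corank1_map n i j False)"
  unfolding corank1_map_def order_preserving_restrict_perm corank1_perm_def
  by (auto simp: monotone_on_def Xs_def shift_perm_def order.order_iff_strict shift_strict_mono)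

lemma order_reversing_corank1_map:
  assumes "i \<in> Omega n" "j \<in> Omega n"
  shows "order_reversing (corank1_map n i j True)"
  unfolding corank1_map_def order_reversing_restrict_perm corank1_perm_def if_True
proof (rule monotone_onI)
  let ?s = "shift_perm i (n + 1 - j)"
  fix x y assume xy: "x \<in> Xs n i" "y \<in> Xs n i" "x \<le> y"
  have "?s permutes {1..n}"
    using assms reflect_mem_Omega[OF assms(2)] shift_perm_permutes_evenperm by (auto simp: Omega_def)
  then have "?s x \<in> {1..n}" "?s y \<in> {1..n}"
    using xy(1,2) permutes_in_image by (fastforce simp: Xs_def Omega_def)+
  moreover have "?s x \<le> ?s y"
    using xy by (auto simp: Xs_def shift_perm_def order.order_iff_strict shift_strict_mono)
  ultimately show "(reverse 1 n \<circ> ?s) y \<le> (reverse 1 n \<circ> ?s) x"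
    by (auto simp: reverse_def)
qed

lemma corank1_map_unique:
  assumes "a \<in> In n" "i \<in> Omega n" "j \<in> Omega n" "dom a = Xs n i" "ran a = Xs n j"
  shows "order_preserving a \<Longrightarrow> a = corank1_map n i j False"
    and "order_reversing a \<Longrightarrow> a = corank1_map n i j True"
proof -
  show "order_preserving a \<Longrightarrow> a = corank1_map n i j False"
    by (rule order_preserving_eqI[OF assms(1) corank1_map_In(1)[OF assms(2,3)]])
      (use assms corank1_map_In(2)[OF assms(2,3)] order_preserving_corank1_map in auto)
  show "order_reversing a \<Longrightarrow> a = corank1_map n i j True"
    by (rule order_reversing_eqI[OF assms(1) corank1_map_In(1)[OF assms(2,3)]])
      (use assms corank1_map_In(2)[OF assms(2,3)] order_reversing_corank1_map[OF assms(2,3)] in auto)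
qed

lemma corank1_map_mult:
  assumes "i \<in> Omega n" "j \<in> Omega n" "k \<in> Omega n"
  shows "pmult (corank1_map n i j s) (corank1_map n j k t) = corank1_map n i k (s \<noteq> t)"
proof -
  let ?p = "pmult (corank1_map n i j s) (corank1_map n j k t)"
  have "?p \<in> In n" using assms by (intro pmult_In corank1_map_In)
  moreover have "dom ?p = Xs n i"
    using assms corank1_map_In by (simp add: dom_pmult_eq)
  moreover have "ran ?p = Xs n k"
    using assms corank1_map_In by (simp add: ran_pmult)
  moreover have "if s \<noteq> t then order_reversing ?p else order_preserving ?p"
    using assms order_preserving_corank1_map order_reversing_corank1_map
    by (cases s; cases t) (auto intro: order_preserving_pmult)
  ultimately show ?thesis
    using corank1_map_unique[OF _ assms(1,3)] by (auto split: if_splits)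
qed

lemma corank1_map_same: "corank1_map n i i False = Some |` Xs n i"
  by (rule ext) (simp add: corank1_map_def corank1_perm_def shift_perm_def shift_def restrict_map_def)

lemma corank1_map_False_apply: "x \<in> Xs n i \<Longrightarrow> corank1_map n i j False x = Some (shift i j x)"
  by (simp add: corank1_map_def corank1_perm_def shift_perm_def Xs_def)

lemma shift_mem_Xs: "i \<in> Omega n \<Longrightarrow> j \<in> Omega n \<Longrightarrow> x \<in> Xs n i \<Longrightarrow> shift i j x \<in> Xs n j"
  using corank1_map_In(2)[of i n j False] corank1_map_False_apply[of x n i j] by (auto intro: ranI)

lemma op_map_Xs: "i \<in> Omega n \<Longrightarrow> j \<in> Omega n \<Longrightarrow> op_map n (Xs n i) (Xs n j) = corank1_map n i j False"
  unfolding op_map_def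
  using corank1_map_In order_preserving_corank1_map corank1_map_unique(1)
  by (intro the_equality) auto

lemma or_map_Xs: "i \<in> Omega n \<Longrightarrow> j \<in> Omega n \<Longrightarrow> or_map n (Xs n i) (Xs n j) = corank1_map n i j True"
  unfolding or_map_def
  using corank1_map_In order_reversing_corank1_map corank1_map_unique(2)
  by (intro the_equality) auto

section \<open>The monoid \<open>AM\<^sub>n\<close>\<close>

lemma AM_In: "a \<in> AM n \<Longrightarrow> a \<in> In n"
  by (simp add: AM_def AI_def)

lemma AM_monotone: "a \<in> AM n \<Longrightarrow> order_preserving a \<or> order_reversing a"
  by (simp add: AM_def PMI_def)

lemma corank1_map_AM_iff:
  assumes "n mod 4 = 2" "i \<in> Omega n" "j \<in> Omega n"
  shows "corank1_map n i j r \<in> AM n \<longleftrightarrow> even (i + j)"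
proof -
  have "corank1_map n i j r \<in> PMI n"
    using assms corank1_map_In order_preserving_corank1_map order_reversing_corank1_map
    by (cases r) (auto simp: PMI_def)
  moreover have "corank1_map n i j r \<in> AI n \<longleftrightarrow> even (i + j)"
    unfolding corank1_map_def
    using restrict_perm_AI_iff[OF corank1_perm_permutes[OF assms(2,3)] assms(2)]
      evenperm_corank1_perm[OF assms]
    by (auto simp: Xs_def)
  ultimately show ?thesis by (auto simp: AM_def)
qed

definition AM_corank1 :: "nat \<Rightarrow> pmap set" where
  "AM_corank1 n = {a \<in> AM n. \<exists>i\<in>Omega n. dom a = Xs n i}"

lemma corank1_map_AM_corank1:
  assumes "n mod 4 = 2" "i \<in> Omega n" "j \<in> Omega n" "even (i + j)"
  shows "corank1_map n i j r \<in> AM_corank1 n"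
  using corank1_map_AM_iff[OF assms(1-3)] assms(2,4) unfolding AM_corank1_def by auto

lemma Xs_inj: "i \<in> Omega n \<Longrightarrow> j \<in> Omega n \<Longrightarrow> Xs n i = Xs n j \<Longrightarrow> i = j"
  by (auto simp: Xs_def)

lemma card_eq_pred_imp_Xs:
  assumes "B \<subseteq> Omega n" "card B = n - 1" "1 \<le> n"
  shows "\<exists>j\<in>Omega n. B = Xs n j"
proof -
  have "B \<noteq> Omega n" using assms(2,3) by (auto simp: Omega_def)
  then obtain j where j: "j \<in> Omega n" "j \<notin> B" using assms(1) by blast
  then have "B \<subseteq> Xs n j" using assms(1) by (auto simp: Xs_def)
  moreover have "card (Xs n j) = card B" using j assms(2) by (simp add: Xs_def Omega_def)
  ultimately have "B = Xs n j"
    using card_subset_eq[of "Xs n j" B] by (simp add: Xs_def Omega_def)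
  then show ?thesis using j(1) by blast
qed

lemma AM_corank1_elim:
  assumes "n mod 4 = 2" "a \<in> AM_corank1 n"
  obtains i j r where "i \<in> Omega n" "j \<in> Omega n" "even (i + j)" "a = corank1_map n i j r"
proof -
  obtain i where a: "a \<in> AM n" and i: "i \<in> Omega n" "dom a = Xs n i"
    using assms(2) by (auto simp: AM_corank1_def)
  have "card (ran a) = n - 1" "1 \<le> n"
    using card_ran_In[OF AM_In[OF a]] i by (auto simp: Xs_def Omega_def)
  then obtain j where j: "j \<in> Omega n" "ran a = Xs n j"
    using card_eq_pred_imp_Xs[of "ran a" n] AM_In[OF a] by (auto simp: In_def)
  have "a = corank1_map n i j False \<or> a = corank1_map n i j True"
    using AM_monotone[OF a] corank1_map_unique[OF AM_In[OF a] i(1) j(1) i(2) j(2)] by blast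
  then obtain r where ar: "a = corank1_map n i j r" by blast
  have "corank1_map n i j r \<in> AM n" using a ar by simp
  then have "even (i + j)" using corank1_map_AM_iff[OF assms(1) i(1) j(1)] by simp
  then show thesis using that[OF i(1) j(1) _ ar] by blast
qed

lemma pid_AM: "pid n \<in> AM n"
proof -
  have "pid n \<in> AI n"
    using restrict_perm_In(1)[OF permutes_id[of "Omega n"] order.refl]
    by (auto simp: pid_eq_restrict_perm AI_def intro!: exI[of _ id])
  then show ?thesis
    using restrict_perm_In(1)[of id n "Omega n"] order_preserving_pid
    by (simp add: AM_def PMI_def pid_eq_restrict_perm)
qed

lemma AM_pmult:
  assumes "a \<in> AM n" "b \<in> AM n"
  shows "pmult a b \<in> AM n"
proof -
  obtain \<sigma> where \<sigma>: "\<sigma> permutes Omega n" "evenperm \<sigma>" "\<forall>x\<in>dom a. a x = Some (\<sigma> x)"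
    using assms(1) by (auto simp: AM_def AI_def)
  obtain \<tau> where \<tau>: "\<tau> permutes Omega n" "evenperm \<tau>" "\<forall>x\<in>dom b. b x = Some (\<tau> x)"
    using assms(2) by (auto simp: AM_def AI_def)
  have "\<tau> \<circ> \<sigma> permutes Omega n" "evenperm (\<tau> \<circ> \<sigma>)"
    using \<sigma> \<tau> permutes_compose evenperm_comp permutation_permutes
    by (metis Omega_def finite_atLeastAtMost)+
  moreover have "pmult a b x = Some ((\<tau> \<circ> \<sigma>) x)" if "x \<in> dom (pmult a b)" for x
  proof -
    have "x \<in> dom a" "the (a x) \<in> dom b" using that by (auto simp: dom_pmult)
    then show ?thesis using \<sigma>(3) \<tau>(3) by (simp add: pmult_apply)
  qed
  moreover have "pmult a b \<in> In n" using assms by (intro pmult_In AM_In)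
  moreover have "order_preserving (pmult a b) \<or> order_reversing (pmult a b)"
    using AM_monotone[OF assms(1)] AM_monotone[OF assms(2)] order_preserving_pmult by blast
  ultimately show ?thesis by (auto simp: AM_def AI_def PMI_def)
qed

lemma gen_subset_AM: "A \<subseteq> AM n \<Longrightarrow> gen n A \<subseteq> AM n"
proof
  fix a assume "A \<subseteq> AM n" "a \<in> gen n A"
  then show "a \<in> AM n"
    by (induction rule: gen.induct[OF \<open>a \<in> gen n A\<close>]) (auto simp: pid_AM AM_pmult)
qed

lemma gen_subset_gen: "A \<subseteq> gen n B \<Longrightarrow> gen n A \<subseteq> gen n B"
proof
  fix a assume "A \<subseteq> gen n B" "a \<in> gen n A"
  then show "a \<in> gen n B"
    by (induction rule: gen.induct[OF \<open>a \<in> gen n A\<close>]) (auto intro: gen.intros)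
qed

text \<open>The only order-reversing candidate is the reversal of \<open>\<Omega>\<^sub>n\<close>, which is odd.\<close>

lemma AM_dom_Omega:
  assumes "n mod 4 = 2" "a \<in> AM n" "dom a = Omega n"
  shows "a = pid n"
proof -
  have In: "a \<in> In n" using AM_In[OF assms(2)] .
  have "ran a \<subseteq> Omega n" "card (ran a) = card (Omega n)"
    using In card_ran_In[OF In] assms(3) by (auto simp: In_def)
  then have ran: "ran a = Omega n" by (simp add: card_subset_eq Omega_def)
  note id_restrict = restrict_perm_In[OF permutes_id[of "Omega n"] order.refl]
  note rev_restrict = restrict_perm_In[OF reverse_permutes[of n, folded Omega_def] order.refl]
  show ?thesis
  proof (cases "order_preserving a")
    case True
    then show ?thesis
      using order_preserving_eqI[OF In, of "pid n"] order_preserving_pid id_restrict assms(3) ran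
      by (simp add: pid_eq_restrict_perm)
  next
    case False
    then have "order_reversing a" using AM_monotone[OF assms(2)] by blast
    moreover have "order_reversing ((Some \<circ> reverse 1 n) |` Omega n)"
      unfolding order_reversing_restrict_perm by (auto simp: monotone_on_def reverse_def Omega_def)
    moreover have "reverse 1 n ` Omega n = Omega n"
      using reverse_permutes[of n] by (simp add: permutes_image Omega_def)
    ultimately have "a = (Some \<circ> reverse 1 n) |` Omega n"
      using order_reversing_eqI[OF In rev_restrict(1)] rev_restrict assms(3) ran by simp
    moreover have "1 \<in> Omega n" using assms(1) by (auto simp: Omega_def)
    ultimately have "evenperm (reverse 1 n)"
      using restrict_perm_AI_iff[OF reverse_permutes[of n, folded Omega_def], of 1 "Omega n"] assms(2)
      by (auto simp: AM_def Xs_def)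
    then show ?thesis using odd_reverse[OF assms(1)] by simp
  qed
qed

section \<open>Generation by the elements of rank \<open>n - 1\<close>\<close>

lemma corank1_map_mult_gen:
  assumes "i \<in> Omega n" "j \<in> Omega n" "k \<in> Omega n"
    and "corank1_map n i j s \<in> gen n G" "corank1_map n j k t \<in> gen n G"
  shows "corank1_map n i k (s \<noteq> t) \<in> gen n G"
  using gen.gen_mult[OF assms(4,5)] corank1_map_mult[OF assms(1-3)] by simp

lemma corank1_map_descending_gen:
  assumes "1 \<le> b" "t \<le> n"
    and step: "\<And>i. b < i \<Longrightarrow> i \<le> t \<Longrightarrow> even (i + b) \<Longrightarrow> corank1_map n i (i - 2) False \<in> gen n G"
  shows "b \<le> j \<Longrightarrow> j < i \<Longrightarrow> i \<le> t \<Longrightarrow> even (i + b) \<Longrightarrow> even (j + b)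
    \<Longrightarrow> corank1_map n i j False \<in> gen n G"
proof (induction i rule: less_induct)
  case (less i)
  show ?case
  proof (cases "j = i - 2")
    case True
    then show ?thesis using step less.prems by simp
  next
    case False
    then have "j < i - 2" "even (i - 2 + b)" using less.prems by presburger+
    then have "corank1_map n (i - 2) j False \<in> gen n G"
      using less.prems by (intro less.IH) auto
    moreover have "corank1_map n i (i - 2) False \<in> gen n G" using step less.prems by simp
    moreover have "i \<in> Omega n" "i - 2 \<in> Omega n" "j \<in> Omega n"
      using less.prems assms(1,2) \<open>j < i - 2\<close> by (auto simp: Omega_def)
    ultimately show ?thesis
      using corank1_map_mult_gen[of i n "i - 2" j False G False] by simp
  qed
qed

text \<open>With \<open>E = corank1_map n\<close> and \<open>\<cdot>\<close> for \<open>pmult\<close>: \<open>E b b True = E b t True \<cdot> E t b False\<close> and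
  \<open>E b j True = E b t True \<cdot> E t j False\<close>; then \<open>E i j r = E i b False \<cdot> E b b (\<not> r) \<cdot> E b j True\<close>.\<close>

lemma corank1_map_parity_class_gen:
  assumes "1 \<le> b" "b < t" "t \<le> n" "even (t + b)"
    and top: "corank1_map n b t True \<in> gen n G"
    and step: "\<And>i. b < i \<Longrightarrow> i \<le> t \<Longrightarrow> even (i + b) \<Longrightarrow> corank1_map n i (i - 2) False \<in> gen n G"
    and i: "b \<le> i" "i \<le> t" "even (i + b)" and j: "b \<le> j" "j \<le> t" "even (j + b)"
  shows "corank1_map n i j r \<in> gen n G"
proof -
  have \<Omega>: "x \<in> Omega n" if "b \<le> x" "x \<le> t" for x
    using that assms(1,3) by (auto simp: Omega_def)
  note down = corank1_map_descending_gen[OF assms(1,3) step]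
  note mult = corank1_map_mult_gen[OF \<Omega> \<Omega> \<Omega>]
  have bb_True: "corank1_map n b b True \<in> gen n G"
    using mult[OF _ _ _ _ _ _ top down[of b t]] assms(2,4) by simp
  have bb: "corank1_map n b b s \<in> gen n G" for s
    using bb_True mult[OF _ _ _ _ _ _ bb_True bb_True] assms(2) by (cases s) auto
  have ib: "corank1_map n i b False \<in> gen n G"
    using bb[of False] down[of b i] i by (cases "i = b") auto
  have bj_True: "corank1_map n b j True \<in> gen n G"
    using top mult[OF _ _ _ _ _ _ top down[of j t]] j assms(2,4) by (cases "j = t") auto
  have "corank1_map n b j r \<in> gen n G"
    using mult[OF _ _ _ _ _ _ bb[of "\<not> r"] bj_True] j assms(2) by simp
  then show ?thesis
    using mult[OF _ _ _ _ _ _ ib] i j by simp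
qed

lemma restrict_Some_gen:
  assumes "\<And>i. i \<in> Omega n \<Longrightarrow> Some |` Xs n i \<in> gen n A" "D \<subseteq> Omega n"
  shows "Some |` D \<in> gen n A"
proof -
  have "Some |` (Omega n - F) \<in> gen n A" if "F \<subseteq> Omega n" for F
  proof -
    have "finite F" using that finite_subset by (auto simp: Omega_def)
    then show ?thesis
      using that
    proof (induction F rule: finite_subset_induct)
      case empty
      show ?case using gen.gen_id[of n A] by (simp add: pid_eq_restrict_Some)
    next
      case (insert x F)
      have "pmult (Some |` (Omega n - F)) (Some |` Xs n x) \<in> gen n A"
        using insert assms(1) by (intro gen.gen_mult) auto
      moreover have "(Omega n - F) \<inter> Xs n x = Omega n - insert x F" by (auto simp: Xs_def)
      ultimately show ?case by (simp add: pmult_restrict_Some)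
    qed
  qed
  from this[of "Omega n - D"] show ?thesis using assms(2) by (simp add: double_diff)
qed

definition carries :: "pmap set \<Rightarrow> nat set \<Rightarrow> nat set \<Rightarrow> bool" where
  "carries M D R \<longleftrightarrow> (\<exists>\<beta>\<in>M. order_preserving \<beta> \<and> D \<subseteq> dom \<beta> \<and> (\<lambda>x. the (\<beta> x)) ` D = R)"

lemma carries_refl:
  assumes "D \<subseteq> Omega n"
  shows "carries (gen n A) D D"
proof -
  have "(\<lambda>x. the (pid n x)) ` D = (\<lambda>x. x) ` D"
    by (rule image_cong) (use assms in \<open>auto simp: pid_def\<close>)
  moreover have "order_preserving (pid n)" by (auto simp: pid_def order_preserving_def)
  ultimately show ?thesis
    using gen.gen_id[of n A] assms by (auto simp: carries_def pid_def subset_iff)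
qed

lemma carries_trans:
  assumes "carries (gen n A) D R" "carries (gen n A) R Q"
  shows "carries (gen n A) D Q"
proof -
  obtain \<beta> where \<beta>: "\<beta> \<in> gen n A" "order_preserving \<beta>" "D \<subseteq> dom \<beta>" "(\<lambda>x. the (\<beta> x)) ` D = R"
    using assms(1) by (auto simp: carries_def)
  obtain \<gamma> where \<gamma>: "\<gamma> \<in> gen n A" "order_preserving \<gamma>" "R \<subseteq> dom \<gamma>" "(\<lambda>x. the (\<gamma> x)) ` R = Q"
    using assms(2) by (auto simp: carries_def)
  have D: "D \<subseteq> dom (pmult \<beta> \<gamma>)" using \<beta>(3,4) \<gamma>(3) by (auto simp: dom_pmult)
  then have "(\<lambda>x. the (pmult \<beta> \<gamma> x)) ` D = (\<lambda>y. the (\<gamma> y)) ` ((\<lambda>x. the (\<beta> x)) ` D)"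
    by (auto simp: the_pmult image_image subset_iff intro!: image_cong)
  then show ?thesis
    using gen.gen_mult[OF \<beta>(1) \<gamma>(1)] order_preserving_pmult(1)[OF \<beta>(2) \<gamma>(2)] D \<beta>(4) \<gamma>(4)
    by (auto simp: carries_def)
qed

lemma carries_shift:
  assumes "corank1_map n i j False \<in> M" "D \<subseteq> Xs n i"
  shows "carries M D (shift i j ` D)"
proof -
  have "(\<lambda>x. the (corank1_map n i j False x)) ` D = shift i j ` D"
    by (rule image_cong) (use assms(2) corank1_map_False_apply in auto)
  then show ?thesis
    unfolding carries_def using assms order_preserving_corank1_map[of n i j]
    by (intro bexI[of _ "corank1_map n i j False"]) auto
qed

lemma carries_shift_both:
  assumes "corank1_map n i j False \<in> gen n A" "corank1_map n j i False \<in> gen n A"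
    and "i \<in> Omega n" "j \<in> Omega n" "D \<subseteq> Xs n i"
  shows "carries (gen n A) D (shift i j ` D) \<and> carries (gen n A) (shift i j ` D) D"
proof -
  have "shift i j ` D \<subseteq> Xs n j" using assms(3-5) shift_mem_Xs by blast
  moreover have "shift j i ` shift i j ` D = (\<lambda>x. x) ` D"
    unfolding image_image by (rule image_cong) (use assms(5) shift_shift in \<open>auto simp: Xs_def\<close>)
  ultimately show ?thesis
    using carries_shift[OF assms(1,5)] carries_shift[OF assms(2), of "shift i j ` D"] by simp
qed

lemma gap_exists:
  assumes "D \<subseteq> {1..n}" "D \<noteq> {1..card D}"
  shows "\<exists>x\<ge>1. x \<notin> D \<and> x + 1 \<in> D"
proof (rule ccontr)
  assume no_gap: "\<not> ?thesis"
  have down_closed: "x \<in> D" if "1 \<le> x" "x \<le> y" "y \<in> D" for x y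
    using that(2,3,1) by (induction x rule: inc_induct) (use no_gap in auto)
  have fin: "finite D" using assms(1) finite_subset by blast
  have "D \<noteq> {}" using assms(2) by auto
  then have "{1..Max D} \<subseteq> D" using fin down_closed[of _ "Max D"] by auto
  moreover have "D \<subseteq> {1..Max D}" using fin assms(1) by auto
  ultimately have "D = {1..Max D}" by blast
  then show False using assms(2) by (metis card_atLeastAtMost diff_Suc_1)
qed

lemma shift_move_exists:
  assumes "D \<subseteq> {1..n}" "card D + 2 \<le> n" "D \<noteq> {1..card D}"
  shows "\<exists>i j. 1 \<le> i \<and> i < j \<and> j \<le> n \<and> i \<notin> D \<and> even (i + j) \<and> (\<exists>d\<in>D. i < d \<and> d \<le> j)"
proof -
  obtain x where x: "1 \<le> x" "x \<notin> D" "x + 1 \<in> D" using gap_exists[OF assms(1,3)] by blast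
  show ?thesis
  proof (cases "x + 2 \<le> n")
    case True
    then show ?thesis using x by (intro exI[of _ x] exI[of _ "x + 2"]) auto
  next
    case False
    then have "n = x + 1" using x(3) assms(1) by fastforce
    then have n: "n = x + 1" "n \<in> D" using x(3) by auto
    have "\<not> {1..n} - {x} \<subseteq> D"
    proof
      assume "{1..n} - {x} \<subseteq> D"
      then have "card ({1..n} - {x}) \<le> card D"
        using assms(1) finite_subset by (intro card_mono) auto
      then show False using assms(2) x(1) n(1) by simp
    qed
    then obtain y where "y \<in> {1..n}" "y \<noteq> x" "y \<notin> D" by blast
    moreover from this have "y \<noteq> n" using n(2) by blast
    ultimately have y: "1 \<le> y" "y < x" "y \<notin> D" using n(1) by auto
    consider "even (y + n)" | "odd (y + n)" "y + 1 \<in> D" | "odd (y + n)" "y + 1 \<notin> D" by blast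
    then show ?thesis
    proof cases
      case 1
      then show ?thesis using y n by (intro exI[of _ y] exI[of _ n] conjI bexI[of _ n]) auto
    next
      case 2
      then show ?thesis
        using y n by (intro exI[of _ y] exI[of _ "y + 2"] conjI bexI[of _ "y + 1"]) auto
    next
      case 3
      then show ?thesis using y n by (intro exI[of _ "y + 1"] exI[of _ n] conjI bexI[of _ n]) auto
    qed
  qed
qed

lemma shift_inj_on: "i \<notin> D \<Longrightarrow> inj_on (shift i j) D"
  by (metis inj_on_inverseI shift_shift)

lemma sum_shift_image_less:
  assumes "finite D" "i < j" "i \<notin> D" "d \<in> D" "i < d" "d \<le> j"
  shows "\<Sum>(shift i j ` D) < \<Sum>D"
proof -
  have "\<Sum>(shift i j ` D) = sum (shift i j) D"
    using sum.reindex[OF shift_inj_on[OF assms(3)]] by simp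
  also have "\<dots> < \<Sum>D"
    using assms by (intro sum_strict_mono_ex1) (auto simp: shift_def)
  finally show ?thesis .
qed

text \<open>Each shift \<open>shift i j\<close> with \<open>i \<notin> D\<close> moving an element of \<open>D\<close> down strictly decreases
  \<open>\<Sum>D\<close>, so repeated shifts carry \<open>D\<close> to an initial segment.\<close>

lemma carries_initial_segment:
  assumes shifts: "\<And>i j. i \<in> Omega n \<Longrightarrow> j \<in> Omega n \<Longrightarrow> even (i + j)
      \<Longrightarrow> corank1_map n i j False \<in> gen n A"
    and "D \<subseteq> Omega n" "card D + 2 \<le> n"
  shows "carries (gen n A) D {1..card D} \<and> carries (gen n A) {1..card D} D"
  using assms(2,3)
proof (induction "\<Sum>D" arbitrary: D rule: less_induct)
  case less
  show ?case
  proof (cases "D = {1..card D}")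
    case True
    then show ?thesis using carries_refl[OF less.prems(1)] by metis
  next
    case False
    obtain i j d where ij: "1 \<le> i" "i < j" "j \<le> n" "i \<notin> D" "even (i + j)"
      and d: "d \<in> D" "i < d" "d \<le> j"
      using shift_move_exists[OF _ less.prems(2) False] less.prems(1) by (auto simp: Omega_def)
    let ?D' = "shift i j ` D"
    have \<Omega>: "i \<in> Omega n" "j \<in> Omega n" using ij by (auto simp: Omega_def)
    have D: "D \<subseteq> Xs n i" using less.prems(1) ij(4) by (auto simp: Xs_def)
    have "finite D" using less.prems(1) finite_subset by (auto simp: Omega_def)
    then have "\<Sum>?D' < \<Sum>D" using sum_shift_image_less ij d by blast
    moreover have "card ?D' = card D" using card_image[OF shift_inj_on[OF ij(4)]] .
    moreover have "?D' \<subseteq> Omega n" using shift_mem_Xs[OF \<Omega>] D by (auto simp: Xs_def)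
    ultimately have "carries (gen n A) ?D' {1..card D} \<and> carries (gen n A) {1..card D} ?D'"
      using less.hyps less.prems(2) by metis
    moreover have "carries (gen n A) D ?D' \<and> carries (gen n A) ?D' D"
      using carries_shift_both[OF shifts shifts \<Omega> D] \<Omega> ij(5) by (simp add: add.commute)
    ultimately show ?thesis using carries_trans by blast
  qed
qed

lemma carries_of_card_eq:
  assumes shifts: "\<And>i j. i \<in> Omega n \<Longrightarrow> j \<in> Omega n \<Longrightarrow> even (i + j)
      \<Longrightarrow> corank1_map n i j False \<in> gen n A"
    and "D \<subseteq> Omega n" "R \<subseteq> Omega n" "card R = card D" "card D + 2 \<le> n"
  shows "carries (gen n A) D R"
  using carries_initial_segment[OF shifts assms(2,5)] carries_initial_segment[OF shifts assms(3)]
    carries_trans assms(4,5) by metis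

lemma corank1_map_gen_AM_corank1:
  assumes "n mod 4 = 2" "i \<in> Omega n" "j \<in> Omega n" "even (i + j)"
  shows "corank1_map n i j r \<in> gen n (AM_corank1 n)"
  using corank1_map_AM_corank1[OF assms] by (rule gen.gen_base)

lemma AM_order_preserving_small_gen:
  assumes "n mod 4 = 2" "a \<in> AM n" "order_preserving a" "card (dom a) + 2 \<le> n"
  shows "a \<in> gen n (AM_corank1 n)"
proof -
  let ?M = "gen n (AM_corank1 n)"
  have In: "a \<in> In n" using AM_In[OF assms(2)] .
  have "dom a \<subseteq> Omega n" "ran a \<subseteq> Omega n" using In by (auto simp: In_def)
  then have "carries ?M (dom a) (ran a)"
    using carries_of_card_eq[OF corank1_map_gen_AM_corank1[OF assms(1)]] card_ran_In[OF In] assms(4)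
    by blast
  then obtain \<beta> where \<beta>: "\<beta> \<in> ?M" "order_preserving \<beta>" "dom a \<subseteq> dom \<beta>"
    "(\<lambda>x. the (\<beta> x)) ` dom a = ran a"
    by (auto simp: carries_def)
  have restrict: "Some |` dom a \<in> ?M"
    using restrict_Some_gen[OF _ \<open>dom a \<subseteq> Omega n\<close>] corank1_map_gen_AM_corank1[OF assms(1)]
    by (metis corank1_map_same dvd_add_triv_left_iff even_add)
  have "?M \<subseteq> AM n" by (rule gen_subset_AM) (auto simp: AM_corank1_def)
  then have "pmult (Some |` dom a) \<beta> \<in> In n"
    using gen.gen_mult[OF restrict \<beta>(1)] AM_In by blast
  then have "a = pmult (Some |` dom a) \<beta>"
    using order_preserving_eqI[OF In] assms(3) \<beta>
      order_preserving_pmult(1)[OF order_preserving_restrict_Some \<beta>(2)]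
    by (simp add: dom_pmult_restrict_Some ran_pmult_restrict_Some)
  then show ?thesis using gen.gen_mult[OF restrict \<beta>(1)] by simp
qed

text \<open>An order-reversing element becomes order-preserving after the involution
  \<open>h\<^sub>j = corank1_map n j j True\<close> for any \<open>j\<close> outside its image.\<close>

lemma AM_small_gen:
  assumes "n mod 4 = 2" "a \<in> AM n" "card (dom a) + 2 \<le> n"
  shows "a \<in> gen n (AM_corank1 n)"
proof (cases "order_preserving a")
  case True
  then show ?thesis using AM_order_preserving_small_gen assms by blast
next
  case False
  then have rev: "order_reversing a" using AM_monotone[OF assms(2)] by blast
  have In: "a \<in> In n" using AM_In[OF assms(2)] .
  have "card (ran a) < card (Omega n)" using card_ran_In[OF In] assms(3) by (simp add: Omega_def)
  then have "ran a \<noteq> Omega n" by auto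
  then obtain j where j: "j \<in> Omega n" "j \<notin> ran a"
    using In by (auto simp: In_def)
  let ?h = "corank1_map n j j True"
  have h: "?h \<in> gen n (AM_corank1 n)" "?h \<in> AM n" "order_reversing ?h"
    using corank1_map_gen_AM_corank1[OF assms(1) j(1) j(1)] corank1_map_AM_iff[OF assms(1) j(1) j(1)]
      order_reversing_corank1_map[OF j(1) j(1)] by auto
  have ran: "ran a \<subseteq> Xs n j" using In j by (auto simp: In_def Xs_def)
  have "pmult a ?h \<in> AM n" "order_preserving (pmult a ?h)" "dom (pmult a ?h) = dom a"
    using AM_pmult[OF assms(2) h(2)] order_preserving_pmult(4)[OF rev h(3)] dom_pmult_eq ran by auto
  then have "pmult a ?h \<in> gen n (AM_corank1 n)"
    using AM_order_preserving_small_gen assms(1,3) by simp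
  moreover have "pmult (pmult a ?h) ?h = a"
    using ran by (simp add: pmult_assoc corank1_map_mult[OF j(1) j(1) j(1)] corank1_map_same
        pmult_restrict_Some_right)
  ultimately show ?thesis using gen.gen_mult[OF _ h(1)] by metis
qed

theorem gen_AM_corank1:
  assumes "n mod 4 = 2"
  shows "gen n (AM_corank1 n) = AM n"
proof
  show "gen n (AM_corank1 n) \<subseteq> AM n" by (rule gen_subset_AM) (auto simp: AM_corank1_def)
next
  show "AM n \<subseteq> gen n (AM_corank1 n)"
  proof
    fix a assume a: "a \<in> AM n"
    have dom: "dom a \<subseteq> Omega n" using AM_In[OF a] by (auto simp: In_def)
    then have "card (dom a) \<le> n" using card_mono[of "Omega n"] by (fastforce simp: Omega_def)
    then consider "card (dom a) = n" | "card (dom a) = n - 1" | "card (dom a) + 2 \<le> n" by linarith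
    then show "a \<in> gen n (AM_corank1 n)"
    proof cases
      case 1
      then have "dom a = Omega n" using dom by (simp add: card_subset_eq Omega_def)
      then show ?thesis using AM_dom_Omega[OF assms a] gen.gen_id by simp
    next
      case 2
      moreover have "1 \<le> n" using assms by presburger
      ultimately have "a \<in> AM_corank1 n"
        using a dom card_eq_pred_imp_Xs[of "dom a" n] by (auto simp: AM_corank1_def)
      then show ?thesis by (rule gen.gen_base)
    next
      case 3
      then show ?thesis using AM_small_gen[OF assms a] by blast
    qed
  qed
qed

section \<open>Minimal generating sets\<close>

lemma gen_dom_subset:
  assumes "c \<in> gen n A"
  shows "c = pid n \<or> (\<exists>a\<in>A. a \<noteq> pid n \<and> dom c \<subseteq> dom a)"
  using assms
proof (induction rule: gen.induct)
  case (gen_mult c d)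
  show ?case
  proof (cases "c = pid n")
    case True
    then have "dom (pmult c d) \<subseteq> dom d" by (auto simp: dom_pmult pid_def split: if_splits)
    moreover have "pmult c d = pid n" if "d = pid n"
      using True that by (simp add: pid_eq_restrict_Some pmult_restrict_Some)
    ultimately show ?thesis using gen_mult.IH(2) by blast
  next
    case False
    have "dom (pmult c d) \<subseteq> dom c" by (auto simp: dom_pmult)
    then show ?thesis using gen_mult.IH(1) False by blast
  qed
qed auto

lemma finite_In: "finite (In n)"
proof (rule finite_subset)
  show "In n \<subseteq> (\<Union>D\<in>Pow (Omega n). {m. dom m = D \<and> ran m \<subseteq> Omega n})"
    by (auto simp: In_def)
  show "finite (\<Union>D\<in>Pow (Omega n). {m. dom m = D \<and> ran m \<subseteq> Omega n})"
    by (intro finite_UN_I finite_set_of_finite_maps) (auto simp: Omega_def intro: finite_subset)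
qed

lemma generating_set_dom_Xs:
  assumes "n mod 4 = 2" "A \<subseteq> AM n" "gen n A = AM n" "i \<in> Omega n"
  shows "\<exists>a\<in>A. dom a = Xs n i"
proof -
  have "Some |` Xs n i \<in> gen n A"
    using assms corank1_map_AM_iff[of n i i False] by (simp add: corank1_map_same)
  moreover have "dom (Some |` Xs n i) \<noteq> dom (pid n)"
    using assms(4) by (auto simp: pid_eq_restrict_Some Xs_def)
  then have "Some |` Xs n i \<noteq> pid n" by metis
  ultimately obtain a where a: "a \<in> A" "a \<noteq> pid n" "Xs n i \<subseteq> dom a"
    using gen_dom_subset by fastforce
  have "dom a \<subseteq> Omega n" using AM_In[of a n] a(1) assms(2) by (auto simp: In_def)
  moreover have "dom a \<noteq> Omega n" using AM_dom_Omega[OF assms(1)] a(1,2) assms(2) by blast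
  ultimately have "dom a = Xs n i" using a(3) unfolding Xs_def by blast
  then show ?thesis using a(1) by blast
qed

lemma card_generating_set_ge:
  assumes "n mod 4 = 2" "A \<subseteq> AM n" "gen n A = AM n"
  shows "finite A" "n \<le> card A"
proof -
  have "A \<subseteq> In n" using assms(2) AM_In by blast
  then show fin: "finite A" by (rule finite_subset[OF _ finite_In])
  have "\<forall>i\<in>Omega n. \<exists>a. a \<in> A \<and> dom a = Xs n i"
    using generating_set_dom_Xs[OF assms] by blast
  then obtain f where f: "\<forall>i\<in>Omega n. f i \<in> A \<and> dom (f i) = Xs n i"
    by (auto dest!: bchoice)
  have "inj_on f (Omega n)"
  proof (rule inj_onI)
    fix i j assume ij: "i \<in> Omega n" "j \<in> Omega n" and eq: "f i = f j"
    have "Xs n i = dom (f i)" "dom (f j) = Xs n j" using f ij by auto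
    then have "Xs n i = Xs n j" using eq by simp
    then show "i = j" using Xs_inj ij by blast
  qed
  moreover have "f ` Omega n \<subseteq> A" using f by auto
  ultimately have "card (Omega n) \<le> card A" using fin by (rule card_inj_on_le)
  then show "n \<le> card A" by (simp add: Omega_def)
qed

lemma rank_eqI:
  assumes "A \<subseteq> M" "finite A" "gen n A = M" "card A = k"
    and "\<And>B. B \<subseteq> M \<Longrightarrow> gen n B = M \<Longrightarrow> k \<le> card B"
  shows "rank n M = k"
  unfolding rank_def
proof (rule Least_equality)
  show "\<exists>A\<subseteq>M. finite A \<and> card A = k \<and> gen n A = M" using assms(1-4) by blast
next
  fix k' assume "\<exists>A\<subseteq>M. finite A \<and> card A = k' \<and> gen n A = M"
  then obtain B where "B \<subseteq> M" "gen n B = M" "card B = k'" by blast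
  then show "k \<le> k'" using assms(5)[of B] by simp
qed

text \<open>The generator with domain \<open>X\<^sub>i\<close>: \<open>x\<^sub>1 h\<^sub>n\<^sub>-\<^sub>1\<close>, \<open>x\<^sub>2 h\<^sub>n\<close>, and \<open>x\<^sub>i\<close> for \<open>i \<ge> 3\<close>.\<close>

definition generator :: "nat \<Rightarrow> nat \<Rightarrow> pmap" where
  "generator n i =
     (if i = 1 then corank1_map n 1 (n - 1) True
      else if i = 2 then corank1_map n 2 n True
      else corank1_map n i (i - 2) False)"

lemma generators_eq:
  assumes "even n" "2 \<le> n"
  shows "{pmult (xg n 1) (hg n (n - 1)), pmult (xg n 2) (hg n n)} \<union> {xg n i | i. 3 \<le> i \<and> i \<le> n}
    = generator n ` {1..n}"
proof -
  have \<Omega>: "1 \<in> Omega n" "2 \<in> Omega n" "n - 1 \<in> Omega n" "n \<in> Omega n"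
    using assms(2) by (auto simp: Omega_def)
  have first: "pmult (xg n 1) (hg n (n - 1)) = generator n 1" "pmult (xg n 2) (hg n n) = generator n 2"
    using assms(1) \<Omega> corank1_map_mult
    by (simp_all add: xg_def hg_def generator_def op_map_Xs or_map_Xs)
  have "{xg n i | i. 3 \<le> i \<and> i \<le> n} = xg n ` {i. 3 \<le> i \<and> i \<le> n}" by blast
  also have "\<dots> = generator n ` {i. 3 \<le> i \<and> i \<le> n}"
  proof (rule image_cong)
    fix i assume "i \<in> {i. 3 \<le> i \<and> i \<le> n}"
    moreover from this have "i \<in> Omega n" "i - 2 \<in> Omega n" by (auto simp: Omega_def)
    ultimately show "xg n i = generator n i" by (simp add: xg_def generator_def op_map_Xs)
  qed simp
  moreover have "{1..n} = {1, 2} \<union> {i. 3 \<le> i \<and> i \<le> n}" using assms(2) by auto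
  ultimately show ?thesis using first by (simp add: image_Un)
qed

lemma dom_generator: "dom (generator n i) = Xs n i"
  by (simp add: generator_def)

lemma card_generators: "card (generator n ` {1..n}) = n"
proof -
  have "inj_on (generator n) {1..n}"
    using Xs_inj dom_generator by (intro inj_onI) (metis Omega_def)
  then show ?thesis by (simp add: card_image)
qed

lemma generator_AM_corank1: "n mod 4 = 2 \<Longrightarrow> i \<in> {1..n} \<Longrightarrow> generator n i \<in> AM_corank1 n"
  unfolding generator_def by (auto intro!: corank1_map_AM_corank1 simp: Omega_def, presburger+)

lemma AM_corank1_subset_gen_generators:
  assumes "n mod 4 = 2" "3 \<le> n"
  shows "AM_corank1 n \<subseteq> gen n (generator n ` {1..n})"
proof
  fix a assume "a \<in> AM_corank1 n"
  then obtain i j r where ij: "i \<in> Omega n" "j \<in> Omega n" "even (i + j)" "a = corank1_map n i j r"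
    by (rule AM_corank1_elim[OF assms(1)])
  have base: "generator n k \<in> gen n (generator n ` {1..n})" if "k \<in> {1..n}" for k
    using that by (intro gen.gen_base) auto
  have step: "corank1_map n k (k - 2) False \<in> gen n (generator n ` {1..n})" if "3 \<le> k" "k \<le> n" for k
    using base[of k] that by (simp add: generator_def)
  have "even n" using assms(1) by presburger
  have ij': "i \<le> n" "j \<le> n" "1 \<le> i" "1 \<le> j" "even i \<longleftrightarrow> even j"
    using ij by (auto simp: Omega_def)
  show "a \<in> gen n (generator n ` {1..n})"
    unfolding ij(4)
  proof (cases "odd i")
    case True
    then have "i \<noteq> n" "j \<noteq> n" using \<open>even n\<close> ij'(5) by auto
    have top: "corank1_map n 1 (n - 1) True \<in> gen n (generator n ` {1..n})"
      using base[of 1] assms(2) by (simp add: generator_def)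
    have down: "corank1_map n k (k - 2) False \<in> gen n (generator n ` {1..n})"
      if "1 < k" "k \<le> n - 1" "even (k + 1)" for k
      using that step[of k] by (cases "k = 2") auto
    show "corank1_map n i j r \<in> gen n (generator n ` {1..n})"
      by (rule corank1_map_parity_class_gen[of 1 "n - 1" n, OF _ _ _ _ top down])
        (use True ij' \<open>i \<noteq> n\<close> \<open>j \<noteq> n\<close> \<open>even n\<close> assms(2) in auto)
  next
    case False
    have top: "corank1_map n 2 n True \<in> gen n (generator n ` {1..n})"
      using base[of 2] assms(2) by (simp add: generator_def)
    have down: "corank1_map n k (k - 2) False \<in> gen n (generator n ` {1..n})"
      if "2 < k" "k \<le> n" "even (k + 2)" for k
      using that step[of k] by auto
    show "corank1_map n i j r \<in> gen n (generator n ` {1..n})"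
      by (rule corank1_map_parity_class_gen[of 2 n n, OF _ _ _ _ top down])
        (use False ij' \<open>even n\<close> assms(2) in auto)
  qed
qed

theorem theorem5p7:
  fixes n :: nat
  assumes "n mod 4 = 2" and "n \<ge> 6"
  defines "G \<equiv> {pmult (xg n 1) (hg n (n - 1)), pmult (xg n 2) (hg n n)}
                 \<union> {xg n i | i. 3 \<le> i \<and> i \<le> n}"
  shows "G \<subseteq> AM n \<and> gen n G = AM n
         \<and> (\<forall>A. A \<subseteq> AM n \<and> gen n A = AM n \<longrightarrow> card G \<le> card A)
         \<and> card G = n \<and> rank n (AM n) = n"
proof -
  have "even n" using assms(1) by presburger
  then have G: "G = generator n ` {1..n}"
    unfolding G_def using assms(2) by (intro generators_eq) auto
  have G_AM: "G \<subseteq> AM n"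
    using G generator_AM_corank1[OF assms(1)] by (auto simp: AM_corank1_def)
  have "AM n \<subseteq> gen n G"
    using gen_subset_gen[OF AM_corank1_subset_gen_generators[OF assms(1)]]
      gen_AM_corank1[OF assms(1)] assms(2) G by simp
  then have gen_G: "gen n G = AM n" by (rule antisym[OF gen_subset_AM[OF G_AM]])
  have card_G: "card G = n" using G card_generators by simp
  have minimal: "n \<le> card A" if "A \<subseteq> AM n" "gen n A = AM n" for A
    using card_generating_set_ge(2)[OF assms(1) that] .
  have "finite G" using G by simp
  then have "rank n (AM n) = n" by (rule rank_eqI[OF G_AM _ gen_G card_G minimal])
  moreover have "\<forall>A. A \<subseteq> AM n \<and> gen n A = AM n \<longrightarrow> card G \<le> card A"
    using minimal card_G by simp
  ultimately show ?thesis using G_AM gen_G card_G by simp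
qed

end
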